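(* Let $\varepsilon\in\{1,-1\}$ and put $\epsilon_i=1$ for $i\in\{1,\dots,N\}\setminus\{n+1,n+2\}$ and $\epsilon_{n+1}=\epsilon_{n+2}=\varepsilon$. Then the following four difference operators are equal: \[ \overrightarrow{\prod_{a=1}^n}\bigl(1-z_{\bar a}(u)D\bigr)\cdot\bigl(1-z_{\bar n}(u)z_n(u+1)D^2\bigr)\cdot\overleftarrow{\prod_{a=1}^n}\bigl(1-z_a(u)D\bigr) \] \[ =\overrightarrow{\prod_{a=1}^n}\bigl(z_a(u+n+1-a)-D\bigr)\cdot\bigl(z_{\bar n}(u-1)z_n(u)-D^2\bigr)\cdot\overleftarrow{\prod_{a=1}^n}\bigl(z_{\bar a}(u-n-2+a)-D\bigr) \] \[ =\overleftarrow{\prod_{i=1}^N}\bigl(1-\epsilon_ix_i(u)D\bigr)=-\overrightarrow{\prod_{i=1}^N}\bigl(\epsilon_ix_i(u+n+1-i)-D\bigr). \] In particular $L(u)$ is a polynomial of degree $N$ in $D$ whose coefficients lie in $\mathcal Y$.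
   Context: Fix an integer $n\ge 2$ and put $N=2n+2$. Let $Q_a(u)$ ($1\le a\le n$, $u\in\mathbb C$) be algebraically independent commuting indeterminates, $\mathcal Q=\mathbb Z[Q_a(u)^{\pm1}]_{1\le a\le n,\,u\in\mathbb C}$, and $\mathcal K$ its field of fractions. Put $d_a=1+\delta_{an}$, $Y_a(u)=Q_a(u-\frac{d_a}{2})/Q_a(u+\frac{d_a}{2})$ for $1\le a\le n$, $Y_0(u)=1$, and $\mathcal Y=\mathbb Z[Y_a(u)^{\pm1}]_{1\le a\le n,\,u\in\mathbb C}\subset\mathcal Q$. Let $J=\{1\prec2\prec\cdots\prec n\prec\bar n\prec\cdots\prec\bar2\prec\bar1\}$. For $1\le a\le n$ set $z_a(u)=\frac{Y_a(u+\frac a2)}{Y_{a-1}(u+\frac{a+1}2)}$, $z_{\bar a}(u)=\frac{Y_{a-1}(u+\frac{2n-a+3}2)}{Y_a(u+\frac{2n-a+4}2)}$; set $x_a(u)=z_a(u)$, $x_{2n+3-a}(u)=z_{\bar a}(u)$ for $1\le a\le n$, and $x_{n+1}(u)=-x_{n+2}(u)=\frac{Q_n(u+\frac n2)Q_n(u+\frac{n+4}2)}{Q_n(u+\frac{n+2}2)^2}$. $D$ is the shift operator: difference operators are expressions $\sum_j c_j(u)D^j$ with $c_j(u)\in\mathcal K$, multiplied using $D\,c(u)=c(u+1)\,D$. Write $\overrightarrow{\prod}_{i=1}^kX_i=X_1X_2\cdots X_k$ and $\overleftarrow{\prod}_{i=1}^kX_i=X_k\cdots X_2X_1$. Define $L(u)=\overrightarrow{\prod}_{i=1}^{N}\bigl(x_i(u+n+1-i)-D\bigr)$.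 *)

theory Defs
  imports Complex_Main
begin

text \<open>An operator is represented by its coefficient sequence: A j u is the coefficient
  c_j(u) of D^j.  Multiplication uses D c(u) = c(u+1) D.\<close>

type_synonym 'k dop = "nat \<Rightarrow> complex \<Rightarrow> 'k"

definition dop_mult :: "'k::field dop \<Rightarrow> 'k dop \<Rightarrow> 'k dop" where
  "dop_mult A B = (\<lambda>m u. \<Sum>i\<le>m. A i u * B (m - i) (u + of_nat i))"

definition dop_const :: "(complex \<Rightarrow> 'k::field) \<Rightarrow> 'k dop" where
  "dop_const c = (\<lambda>j u. if j = 0 then c u else 0)"

definition dop_one :: "'k::field dop" where
  "dop_one = dop_const (\<lambda>_. 1)"

definition dop_D :: "'k::field dop" where
  "dop_D = (\<lambda>j u. if j = 1 then 1 else 0)"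

definition dop_minus :: "'k::field dop \<Rightarrow> 'k dop \<Rightarrow> 'k dop" where
  "dop_minus A B = (\<lambda>j u. A j u - B j u)"

definition dop_neg :: "'k::field dop \<Rightarrow> 'k dop" where
  "dop_neg A = (\<lambda>j u. - A j u)"

definition dop_prod :: "'k::field dop list \<Rightarrow> 'k dop" where
  "dop_prod Xs = foldr dop_mult Xs dop_one"

text \<open>overrightarrow prod_{i=1}^k X_i = X_1 ... X_k, overleftarrow = X_k ... X_1\<close>
definition rprod :: "nat \<Rightarrow> (nat \<Rightarrow> 'k::field dop) \<Rightarrow> 'k dop" where
  "rprod k X = dop_prod (map X [1..<k+1])"

definition lprod :: "nat \<Rightarrow> (nat \<Rightarrow> 'k::field dop) \<Rightarrow> 'k dop" where
  "lprod k X = dop_prod (rev (map X [1..<k+1]))"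

definition dd :: "nat \<Rightarrow> nat \<Rightarrow> complex" where
  "dd n a = (if a = n then 2 else 1)"

definition Yv :: "nat \<Rightarrow> (nat \<Rightarrow> complex \<Rightarrow> 'k::field) \<Rightarrow> nat \<Rightarrow> complex \<Rightarrow> 'k" where
  "Yv n Q a u = (if a = 0 then 1 else Q a (u - dd n a / 2) / Q a (u + dd n a / 2))"

definition zv :: "nat \<Rightarrow> (nat \<Rightarrow> complex \<Rightarrow> 'k::field) \<Rightarrow> nat \<Rightarrow> complex \<Rightarrow> 'k" where
  "zv n Q a u = Yv n Q a (u + of_nat a / 2) / Yv n Q (a - 1) (u + (of_nat a + 1) / 2)"

definition zbar :: "nat \<Rightarrow> (nat \<Rightarrow> complex \<Rightarrow> 'k::field) \<Rightarrow> nat \<Rightarrow> complex \<Rightarrow> 'k" where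
  "zbar n Q a u = Yv n Q (a - 1) (u + (2 * of_nat n - of_nat a + 3) / 2)
                  / Yv n Q a (u + (2 * of_nat n - of_nat a + 4) / 2)"

definition xmid :: "nat \<Rightarrow> (nat \<Rightarrow> complex \<Rightarrow> 'k::field) \<Rightarrow> complex \<Rightarrow> 'k" where
  "xmid n Q u = Q n (u + of_nat n / 2) * Q n (u + (of_nat n + 4) / 2)
                / (Q n (u + (of_nat n + 2) / 2))^2"

definition xv :: "nat \<Rightarrow> (nat \<Rightarrow> complex \<Rightarrow> 'k::field) \<Rightarrow> nat \<Rightarrow> complex \<Rightarrow> 'k" where
  "xv n Q i u = (if i \<le> n then zv n Q i u
                 else if i = n + 1 then xmid n Q u
                 else if i = n + 2 then - xmid n Q u
                 else zbar n Q (2 * n + 3 - i) u)"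

definition epsv :: "nat \<Rightarrow> int \<Rightarrow> nat \<Rightarrow> 'k::field" where
  "epsv n \<epsilon> i = (if i = n + 1 \<or> i = n + 2 then of_int \<epsilon> else 1)"

definition Lop :: "nat \<Rightarrow> (nat \<Rightarrow> complex \<Rightarrow> 'k::field) \<Rightarrow> 'k dop" where
  "Lop n Q = rprod (2 * n + 2)
     (\<lambda>i. dop_minus (dop_const (\<lambda>u. xv n Q i (u + of_nat n + 1 - of_nat i))) dop_D)"

text \<open>Formal elements of the ring Y = Z[Y_a(u)^{+-1}], 1 <= a <= n.\<close>
datatype yexpr = YAtom nat complex | YInv nat complex | YConst int
  | YAdd yexpr yexpr | YMul yexpr yexpr

fun yeval :: "nat \<Rightarrow> (nat \<Rightarrow> complex \<Rightarrow> 'k::field) \<Rightarrow> yexpr \<Rightarrow> 'k" where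
  "yeval n Q (YAtom a u) = (if 1 \<le> a \<and> a \<le> n then Yv n Q a u else 1)"
| "yeval n Q (YInv a u) = (if 1 \<le> a \<and> a \<le> n then inverse (Yv n Q a u) else 1)"
| "yeval n Q (YConst k) = of_int k"
| "yeval n Q (YAdd e f) = yeval n Q e + yeval n Q f"
| "yeval n Q (YMul e f) = yeval n Q e * yeval n Q f"

definition admissible :: "nat \<Rightarrow> (nat \<Rightarrow> complex \<Rightarrow> 'k::field) \<Rightarrow> bool" where
  "admissible n Q = (\<forall>a u. 1 \<le> a \<and> a \<le> n \<longrightarrow> Q a u \<noteq> 0)"

end

theory Submission
  imports Defs
begin

text \<open>
  Let F k and G k be multiplication by Y_k(u + n + 1 - k/2) and by 1 / Y_k(u + k/2). They
  intertwine the factors of the first product with those of the second,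
    (1 - zbar_a(u) D) F a = F (a - 1) (z_a(u + n + 1 - a) - D),
    G a (1 - z_a(u) D) = (zbar_a(u - n - 2 + a) - D) G (a - 1),
  and F n, G n conjugate the two quadratic middle factors into each other. Along the products
  these relations telescope, ending in F 0 = G 0 = 1 because Y_0 = 1.

  The third and fourth products are the first and minus the second with the two middle linear
  factors multiplied out: as x_(n+2) = - x_(n+1) their D-terms cancel, and as eps^2 = 1 and
  x_(n+1)(u) x_(n+1)(u + 1) = zbar_n(u) z_n(u + 1) what remains is the quadratic middle factor.
  Finally L(u) is minus the fourth product for eps = 1. As a product of N factors c(u) - D it has
  degree N with leading coefficient (-1)^N; as minus the second product it is built from the
  z_a and zbar_a alone, so its coefficients lie in \<open>\<Y>\<close>.
\<close>

section \<open>Difference operators\<close>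

lemma dop_mult_assoc: "dop_mult (dop_mult A B) C = dop_mult A (dop_mult B C)"
proof (intro ext)
  fix m u
  define g where "g = (\<lambda>j k. A j u * B k (u + of_nat j) * C (m - j - k) (u + of_nat j + of_nat k))"
  have "dop_mult (dop_mult A B) C m u = (\<Sum>i\<le>m. \<Sum>j\<le>i. g j (i - j))"
    unfolding dop_mult_def g_def sum_distrib_right
    by (intro sum.cong refl) (simp add: mult.assoc of_nat_diff)
  also have "\<dots> = (\<Sum>(j, k)\<in>{(j, k). j + k \<le> m}. g j k)"
    by (rule sum.triangle_reindex_eq[symmetric])
  also have "{(j, k). j + k \<le> m} = Sigma {..m} (\<lambda>j. {..m - j})"
    by auto
  also have "(\<Sum>(j, k)\<in>Sigma {..m} (\<lambda>j. {..m - j}). g j k) = (\<Sum>j\<le>m. \<Sum>k\<le>m - j. g j k)"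
    by (rule sum.Sigma[symmetric]) auto
  also have "\<dots> = dop_mult A (dop_mult B C) m u"
    unfolding dop_mult_def g_def sum_distrib_left
    by (intro sum.cong refl) (simp add: mult.assoc add.assoc diff_diff_add)
  finally show "dop_mult (dop_mult A B) C m u = dop_mult A (dop_mult B C) m u" .
qed

lemma dop_mult_const_left: "dop_mult (dop_const f) A = (\<lambda>j u. f u * A j u)"
proof (intro ext)
  fix j u
  have "dop_mult (dop_const f) A j u = (\<Sum>i\<le>j. if i = 0 then f u * A j u else 0)"
    unfolding dop_mult_def dop_const_def by (intro sum.cong refl) auto
  then show "dop_mult (dop_const f) A j u = f u * A j u" by simp
qed

lemma dop_mult_const_right: "dop_mult A (dop_const f) = (\<lambda>j u. A j u * f (u + of_nat j))"
proof (intro ext)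
  fix j u
  have "dop_mult A (dop_const f) j u = (\<Sum>i\<le>j. if i = j then A j u * f (u + of_nat j) else 0)"
    unfolding dop_mult_def dop_const_def by (intro sum.cong refl) auto
  then show "dop_mult A (dop_const f) j u = A j u * f (u + of_nat j)" by simp
qed

lemma dop_mult_D_right: "dop_mult A dop_D = (\<lambda>j u. if j = 0 then 0 else A (j - 1) u)"
proof (intro ext)
  fix j u
  have "dop_mult A dop_D j u = (\<Sum>i\<le>j. if i = j - 1 \<and> j \<noteq> 0 then A (j - 1) u else 0)"
    unfolding dop_mult_def dop_D_def by (intro sum.cong refl) auto
  then show "dop_mult A dop_D j u = (if j = 0 then 0 else A (j - 1) u)" by simp
qed

lemma dop_mult_one_left [simp]: "dop_mult dop_one A = A"
  unfolding dop_one_def dop_mult_const_left by simp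

lemma dop_mult_one_right [simp]: "dop_mult A dop_one = A"
  unfolding dop_one_def dop_mult_const_right by simp

lemma dop_mult_neg_left: "dop_mult (dop_neg A) B = dop_neg (dop_mult A B)"
  by (auto simp: dop_neg_def dop_mult_def sum_negf intro!: ext)

lemma dop_mult_neg_right: "dop_mult A (dop_neg B) = dop_neg (dop_mult A B)"
  by (auto simp: dop_neg_def dop_mult_def sum_negf intro!: ext)

lemma dop_neg_neg [simp]: "dop_neg (dop_neg A) = A"
  by (simp add: dop_neg_def)

lemma dop_neg_mult_middle: "dop_neg (dop_mult (dop_mult A M) B) = dop_mult (dop_mult A (dop_neg M)) B"
  by (simp add: dop_mult_neg_left dop_mult_neg_right)

lemma dop_D_squared: "dop_mult dop_D dop_D = (\<lambda>j u. if j = 2 then 1 else 0)"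
  unfolding dop_mult_D_right by (auto simp: dop_D_def intro!: ext)

lemma dop_one_minus_const_D:
  "dop_minus dop_one (dop_mult (dop_const c) dop_D) = (\<lambda>j u. if j = 0 then 1 else if j = 1 then - c u else 0)"
  unfolding dop_mult_const_left
  by (auto simp: dop_minus_def dop_one_def dop_const_def dop_D_def intro!: ext)

lemma dop_const_minus_D:
  "dop_minus (dop_const c) dop_D = (\<lambda>j u. if j = 0 then c u else if j = 1 then - 1 else 0)"
  by (auto simp: dop_minus_def dop_const_def dop_D_def intro!: ext)

lemma dop_one_minus_const_D2:
  "dop_minus dop_one (dop_mult (dop_const c) (dop_mult dop_D dop_D))
     = (\<lambda>j u. if j = 0 then 1 else if j = 2 then - c u else 0)"
  unfolding dop_mult_const_left dop_D_squared
  by (auto simp: dop_minus_def dop_one_def dop_const_def intro!: ext)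

lemma dop_const_minus_D2:
  "dop_minus (dop_const c) (dop_mult dop_D dop_D) = (\<lambda>j u. if j = 0 then c u else if j = 2 then - 1 else 0)"
  unfolding dop_D_squared by (auto simp: dop_minus_def dop_const_def intro!: ext)

lemma dop_mult_coeff_above:
  assumes "\<And>j u. p < j \<Longrightarrow> A j u = 0" and "\<And>j u. q < j \<Longrightarrow> B j u = 0" and "p + q < j"
  shows "dop_mult A B j u = 0"
  unfolding dop_mult_def
proof (intro sum.neutral ballI)
  fix i assume "i \<in> {..j}"
  then show "A i u * B (j - i) (u + of_nat i) = 0"
    using assms by (cases "p < i") auto
qed

lemma dop_mult_coeff_top:
  assumes "\<And>j u. p < j \<Longrightarrow> A j u = 0" and "\<And>j u. q < j \<Longrightarrow> B j u = 0"
  shows "dop_mult A B (p + q) u = A p u * B q (u + of_nat p)"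
proof -
  have "dop_mult A B (p + q) u = (\<Sum>i\<le>p + q. if i = p then A p u * B q (u + of_nat p) else 0)"
    unfolding dop_mult_def
  proof (intro sum.cong refl)
    fix i assume "i \<in> {..p + q}"
    then show "A i u * B (p + q - i) (u + of_nat i) = (if i = p then A p u * B q (u + of_nat p) else 0)"
      using assms by (cases "p < i"; cases "i = p") auto
  qed
  then show ?thesis by simp
qed

section \<open>Ordered products\<close>

lemma dop_prod_append: "dop_prod (xs @ ys) = dop_mult (dop_prod xs) (dop_prod ys)"
  by (induction xs) (simp_all add: dop_prod_def dop_mult_assoc)

lemma rprod_0 [simp]: "rprod 0 X = dop_one"
  by (simp add: rprod_def dop_prod_def)

lemma lprod_0 [simp]: "lprod 0 X = dop_one"
  by (simp add: lprod_def dop_prod_def)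

lemma rprod_Suc: "rprod (Suc m) X = dop_mult (rprod m X) (X (Suc m))"
  by (simp add: rprod_def dop_prod_append) (simp add: dop_prod_def)

lemma lprod_Suc: "lprod (Suc m) X = dop_mult (X (Suc m)) (lprod m X)"
  by (simp add: lprod_def dop_prod_def)

lemma rprod_cong: "(\<And>i. 1 \<le> i \<Longrightarrow> i \<le> m \<Longrightarrow> X i = Y i) \<Longrightarrow> rprod m X = rprod m Y"
  unfolding rprod_def by (intro arg_cong[where f = dop_prod] map_cong) auto

lemma lprod_cong: "(\<And>i. 1 \<le> i \<Longrightarrow> i \<le> m \<Longrightarrow> X i = Y i) \<Longrightarrow> lprod m X = lprod m Y"
  unfolding lprod_def by (intro arg_cong[where f = dop_prod] arg_cong[where f = rev] map_cong) auto

lemma rprod_add: "rprod (m + k) X = dop_mult (rprod m X) (rprod k (\<lambda>i. X (m + i)))"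
  by (induction k) (simp_all add: rprod_Suc dop_mult_assoc)

lemma lprod_add: "lprod (m + k) X = dop_mult (lprod k (\<lambda>i. X (m + i))) (lprod m X)"
  by (induction k) (simp_all add: lprod_Suc dop_mult_assoc)

lemma lprod_eq_rprod_reflect: "lprod m X = rprod m (\<lambda>i. X (Suc m - i))"
proof (induction m)
  case 0
  then show ?case by simp
next
  case (Suc m)
  have "rprod (Suc m) (\<lambda>i. X (Suc (Suc m) - i))
      = dop_mult (X (Suc m)) (rprod m (\<lambda>i. X (Suc (Suc m) - Suc i)))"
    using rprod_add[of 1 m "\<lambda>i. X (Suc (Suc m) - i)"] by (simp add: rprod_Suc)
  then show ?case by (simp add: lprod_Suc Suc.IH)
qed

lemma rprod_2: "rprod 2 X = dop_mult (X 1) (X 2)"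
  using rprod_Suc[of 1 X] by (simp add: numeral_2_eq_2 rprod_Suc)

lemma lprod_2: "lprod 2 X = dop_mult (X 2) (X 1)"
  using lprod_Suc[of 1 X] by (simp add: numeral_2_eq_2 lprod_Suc)

lemma rprod_split_middle:
  "rprod (2 * n + 2) X
     = dop_mult (dop_mult (rprod n X) (dop_mult (X (n + 1)) (X (n + 2)))) (lprod n (\<lambda>a. X (2 * n + 3 - a)))"
proof -
  have "rprod (2 * n + 2) X = rprod (n + (2 + n)) X"
    by (simp add: mult_2 add.commute add.left_commute)
  also have "\<dots> = dop_mult (rprod n X) (dop_mult (rprod 2 (\<lambda>i. X (n + i))) (rprod n (\<lambda>i. X (n + (2 + i)))))"
    unfolding rprod_add ..
  also have "rprod n (\<lambda>i. X (n + (2 + i))) = lprod n (\<lambda>a. X (2 * n + 3 - a))"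
    unfolding lprod_eq_rprod_reflect by (intro rprod_cong arg_cong[where f = X]) auto
  finally show ?thesis
    by (simp only: rprod_2 dop_mult_assoc)
qed

lemma lprod_split_middle:
  "lprod (2 * n + 2) X
     = dop_mult (dop_mult (rprod n (\<lambda>a. X (2 * n + 3 - a))) (dop_mult (X (n + 2)) (X (n + 1)))) (lprod n X)"
proof -
  have "lprod (2 * n + 2) X = lprod (n + (2 + n)) X"
    by (simp add: mult_2 add.commute add.left_commute)
  also have "\<dots> = dop_mult (dop_mult (lprod n (\<lambda>i. X (n + (2 + i)))) (lprod 2 (\<lambda>i. X (n + i)))) (lprod n X)"
    unfolding lprod_add ..
  also have "lprod n (\<lambda>i. X (n + (2 + i))) = rprod n (\<lambda>a. X (2 * n + 3 - a))"
    unfolding lprod_eq_rprod_reflect by (intro rprod_cong arg_cong[where f = X]) auto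
  finally show ?thesis
    by (simp only: lprod_2 dop_mult_assoc)
qed

lemma rprod_lprod_gauge:
  assumes "\<And>a. a < m \<Longrightarrow> dop_mult (L (Suc a)) (F (Suc a)) = dop_mult (F a) (L' (Suc a))"
    and "\<And>a. a < m \<Longrightarrow> dop_mult (G (Suc a)) (R (Suc a)) = dop_mult (R' (Suc a)) (G a)"
    and "M = dop_mult (dop_mult (F m) M') (G m)"
  shows "dop_mult (dop_mult (rprod m L) M) (lprod m R)
       = dop_mult (dop_mult (F 0) (dop_mult (dop_mult (rprod m L') M') (lprod m R'))) (G 0)"
  using assms
proof (induction m arbitrary: M M')
  case 0
  then show ?case by (simp add: dop_mult_assoc)
next
  case (Suc m)
  let ?M = "dop_mult (dop_mult (L (Suc m)) M) (R (Suc m))"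
  let ?M' = "dop_mult (dop_mult (L' (Suc m)) M') (R' (Suc m))"
  have "?M = dop_mult (dop_mult (dop_mult (L (Suc m)) (F (Suc m))) M') (dop_mult (G (Suc m)) (R (Suc m)))"
    using Suc.prems(3) by (simp add: dop_mult_assoc)
  also have "\<dots> = dop_mult (dop_mult (F m) ?M') (G m)"
    using Suc.prems(1,2) by (simp add: dop_mult_assoc)
  finally have "dop_mult (dop_mult (rprod m L) ?M) (lprod m R)
      = dop_mult (dop_mult (F 0) (dop_mult (dop_mult (rprod m L') ?M') (lprod m R'))) (G 0)"
    using Suc.prems(1,2) by (intro Suc.IH) simp_all
  then show ?case
    by (simp add: rprod_Suc lprod_Suc dop_mult_assoc)
qed

section \<open>Factors of degree at most two\<close>

lemma one_minus_D_gauge: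
  assumes "\<And>u. f u = g u * d u" and "\<And>u. c u * f (u + 1) = g u"
  shows "dop_mult (dop_minus dop_one (dop_mult (dop_const c) dop_D)) (dop_const f)
       = dop_mult (dop_const g) (dop_minus (dop_const d) dop_D)"
  unfolding dop_one_minus_const_D dop_const_minus_D
  unfolding dop_mult_const_left dop_mult_const_right
  using assms by (auto intro!: ext)

lemma gauge_one_minus_D:
  assumes "\<And>u. g u = d u * f u" and "\<And>u. g u * c u = f (u + 1)"
  shows "dop_mult (dop_const g) (dop_minus dop_one (dop_mult (dop_const c) dop_D))
       = dop_mult (dop_minus (dop_const d) dop_D) (dop_const f)"
  unfolding dop_one_minus_const_D dop_const_minus_D
  unfolding dop_mult_const_left dop_mult_const_right
  using assms by (auto intro!: ext)

lemma one_minus_D2_gauge: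
  assumes "\<And>u. f u * d u * g u = 1" and "\<And>u. f u * g (u + 2) = c u"
  shows "dop_minus dop_one (dop_mult (dop_const c) (dop_mult dop_D dop_D))
       = dop_mult (dop_mult (dop_const f) (dop_minus (dop_const d) (dop_mult dop_D dop_D))) (dop_const g)"
  unfolding dop_one_minus_const_D2 dop_const_minus_D2
  unfolding dop_mult_const_left dop_mult_const_right
  using assms by (auto intro!: ext)

lemma dop_mult_degree_le_1:
  assumes "\<And>j u. 2 \<le> j \<Longrightarrow> A j u = 0" and "\<And>j u. 2 \<le> j \<Longrightarrow> B j u = 0"
  shows "dop_mult A B = (\<lambda>j u. if j = 0 then A 0 u * B 0 u
     else if j = 1 then A 0 u * B 1 u + A 1 u * B 0 (u + 1)
     else if j = 2 then A 1 u * B 1 (u + 1) else 0)"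
proof (intro ext)
  fix j :: nat and u
  consider "j = 0" | "j = 1" | "j = 2" | "2 < j"
    by linarith
  then show "dop_mult A B j u = (if j = 0 then A 0 u * B 0 u
     else if j = 1 then A 0 u * B 1 u + A 1 u * B 0 (u + 1)
     else if j = 2 then A 1 u * B 1 (u + 1) else 0)"
  proof cases
    case 4
    then show ?thesis
      using dop_mult_coeff_above[of 1 A 1 B j u] assms by simp
  qed (simp_all add: dop_mult_def atMost_Suc numeral_2_eq_2 assms)
qed

lemma one_minus_D_mult_one_minus_D:
  assumes "\<And>u. b u = - a u" and "\<And>u. a u * a (u + 1) = c u"
  shows "dop_mult (dop_minus dop_one (dop_mult (dop_const a) dop_D))
                  (dop_minus dop_one (dop_mult (dop_const b) dop_D))
       = dop_minus dop_one (dop_mult (dop_const c) (dop_mult dop_D dop_D))"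
  unfolding dop_one_minus_const_D dop_one_minus_const_D2
  by (subst dop_mult_degree_le_1) (auto simp: assms(1) assms(2)[symmetric] intro!: ext)

lemma const_minus_D_mult_const_minus_D:
  assumes "\<And>u. b (u + 1) = - a u" and "\<And>u. a u * a (u - 1) = c u"
  shows "dop_neg (dop_mult (dop_minus (dop_const a) dop_D) (dop_minus (dop_const b) dop_D))
       = dop_minus (dop_const c) (dop_mult dop_D dop_D)"
proof -
  have b: "b u = - a (u - 1)" for u
    using assms(1)[of "u - 1"] by simp
  show ?thesis
    unfolding dop_const_minus_D dop_const_minus_D2
    by (subst dop_mult_degree_le_1) (auto simp: dop_neg_def b assms(2)[symmetric] intro!: ext)
qed

lemma rprod_const_minus_D_coeffs:
  "(\<forall>j u. m < j \<longrightarrow> rprod m (\<lambda>i. dop_minus (dop_const (c i)) dop_D) j u = 0)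
   \<and> (\<forall>u. rprod m (\<lambda>i. dop_minus (dop_const (c i)) dop_D) m u = (- 1) ^ m)"
proof (induction m)
  case 0
  then show ?case by (simp add: dop_one_def dop_const_def)
next
  case (Suc m)
  let ?P = "rprod m (\<lambda>i. dop_minus (dop_const (c i)) dop_D)"
  let ?X = "dop_minus (dop_const (c (Suc m))) dop_D"
  have P: "\<And>j u. m < j \<Longrightarrow> ?P j u = 0" and X: "\<And>j u. 1 < j \<Longrightarrow> ?X j u = 0"
    using Suc.IH by (simp_all add: dop_const_minus_D)
  have top: "?X 1 u = - 1" for u
    by (simp add: dop_const_minus_D)
  show ?case
    unfolding rprod_Suc
    using dop_mult_coeff_above[of m ?P 1 ?X, OF P X] dop_mult_coeff_top[of m ?P 1 ?X, OF P X] Suc.IH top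
    by simp
qed

section \<open>The four factorisations\<close>

lemma Yv_nonzero: "admissible n Q \<Longrightarrow> a \<le> n \<Longrightarrow> Yv n Q a u \<noteq> 0"
  by (auto simp: Yv_def admissible_def)

lemma xmid_mult_shift:
  assumes "admissible n Q" and "1 \<le> n"
  shows "xmid n Q u * xmid n Q (u + 1) = zbar n Q n u * zv n Q n (u + 1)"
  using assms Yv_nonzero[OF assms(1), of "n - 1"]
  by (simp add: admissible_def xmid_def zbar_def zv_def Yv_def dd_def field_simps power2_eq_square)

lemma op1_eq_op2:
  assumes "admissible n Q" and "1 \<le> n"
  shows "dop_mult
           (dop_mult
             (rprod n (\<lambda>a. dop_minus dop_one (dop_mult (dop_const (\<lambda>u. zbar n Q a u)) dop_D)))
             (dop_minus dop_one
                (dop_mult (dop_const (\<lambda>u. zbar n Q n u * zv n Q n (u + 1))) (dop_mult dop_D dop_D))))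
           (lprod n (\<lambda>a. dop_minus dop_one (dop_mult (dop_const (\<lambda>u. zv n Q a u)) dop_D)))
       = dop_mult
           (dop_mult
             (rprod n (\<lambda>a. dop_minus (dop_const (\<lambda>u. zv n Q a (u + of_nat n + 1 - of_nat a))) dop_D))
             (dop_minus (dop_const (\<lambda>u. zbar n Q n (u - 1) * zv n Q n u)) (dop_mult dop_D dop_D)))
           (lprod n (\<lambda>a. dop_minus (dop_const (\<lambda>u. zbar n Q a (u - of_nat n - 2 + of_nat a))) dop_D))"
proof -
  define F where "F a = dop_const (\<lambda>u. Yv n Q a (u + of_nat n + 1 - of_nat a / 2))" for a
  define G where "G a = dop_const (\<lambda>u. inverse (Yv n Q a (u + of_nat a / 2)))" for a
  note nz = Yv_nonzero[OF assms(1)]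
  have "F 0 = dop_one" "G 0 = dop_one"
    by (simp_all add: F_def G_def Yv_def dop_one_def)
  moreover have "dop_mult (dop_minus dop_one (dop_mult (dop_const (\<lambda>u. zbar n Q (Suc a) u)) dop_D)) (F (Suc a))
      = dop_mult (F a) (dop_minus (dop_const (\<lambda>u. zv n Q (Suc a) (u + of_nat n + 1 - of_nat (Suc a)))) dop_D)"
    if "a < n" for a
    unfolding F_def by (rule one_minus_D_gauge) (use that in \<open>simp_all add: nz zv_def zbar_def field_simps\<close>)
  moreover have "dop_mult (G (Suc a)) (dop_minus dop_one (dop_mult (dop_const (\<lambda>u. zv n Q (Suc a) u)) dop_D))
      = dop_mult (dop_minus (dop_const (\<lambda>u. zbar n Q (Suc a) (u - of_nat n - 2 + of_nat (Suc a)))) dop_D) (G a)"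
    if "a < n" for a
    unfolding G_def by (rule gauge_one_minus_D) (use that in \<open>simp_all add: nz zv_def zbar_def field_simps\<close>)
  moreover have "dop_minus dop_one (dop_mult (dop_const (\<lambda>u. zbar n Q n u * zv n Q n (u + 1))) (dop_mult dop_D dop_D))
      = dop_mult (dop_mult (F n) (dop_minus (dop_const (\<lambda>u. zbar n Q n (u - 1) * zv n Q n u)) (dop_mult dop_D dop_D))) (G n)"
    unfolding F_def G_def by (rule one_minus_D2_gauge) (simp_all add: nz zv_def zbar_def field_simps)
  ultimately show ?thesis
    by (subst rprod_lprod_gauge[where F = F and G = G]) simp_all
qed

lemma epsv_xv_low: "a \<le> n \<Longrightarrow> epsv n \<epsilon> a * xv n Q a u = zv n Q a u"
  by (simp add: epsv_def xv_def)

lemma epsv_xv_high: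
  assumes "1 \<le> a" and "a \<le> n"
  shows "epsv n \<epsilon> (2 * n + 3 - a) * xv n Q (2 * n + 3 - a) u = zbar n Q a u"
proof -
  have "\<not> 2 * n + 3 - a \<le> n" "2 * n + 3 - a \<noteq> n + 1" "2 * n + 3 - a \<noteq> n + 2" "2 * n + 3 - (2 * n + 3 - a) = a"
    using assms by auto
  then show ?thesis
    by (simp add: epsv_def xv_def)
qed

lemma op3_eq_op1:
  assumes "admissible n Q" and "1 \<le> n" and "\<epsilon> = 1 \<or> \<epsilon> = -1"
  shows "lprod (2 * n + 2) (\<lambda>i. dop_minus dop_one (dop_mult (dop_const (\<lambda>u. epsv n \<epsilon> i * xv n Q i u)) dop_D))
       = dop_mult
           (dop_mult
             (rprod n (\<lambda>a. dop_minus dop_one (dop_mult (dop_const (\<lambda>u. zbar n Q a u)) dop_D)))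
             (dop_minus dop_one
                (dop_mult (dop_const (\<lambda>u. zbar n Q n u * zv n Q n (u + 1))) (dop_mult dop_D dop_D))))
           (lprod n (\<lambda>a. dop_minus dop_one (dop_mult (dop_const (\<lambda>u. zv n Q a u)) dop_D)))"
    (is "lprod _ ?X = _")
proof -
  have eps: "of_int \<epsilon> * (of_int \<epsilon> * c) = c" for c :: 'a
    using assms(3) by auto
  have "?X (2 * n + 3 - a) = dop_minus dop_one (dop_mult (dop_const (\<lambda>u. zbar n Q a u)) dop_D)"
    if "1 \<le> a" "a \<le> n" for a
    by (simp add: epsv_xv_high[OF that])
  moreover have "dop_mult (?X (n + 2)) (?X (n + 1))
      = dop_minus dop_one (dop_mult (dop_const (\<lambda>u. zbar n Q n u * zv n Q n (u + 1))) (dop_mult dop_D dop_D))"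
    by (rule one_minus_D_mult_one_minus_D)
      (simp_all add: xv_def epsv_def eps xmid_mult_shift[OF assms(1,2), symmetric])
  moreover have "?X a = dop_minus dop_one (dop_mult (dop_const (\<lambda>u. zv n Q a u)) dop_D)"
    if "1 \<le> a" "a \<le> n" for a
    using that by (simp add: epsv_xv_low)
  ultimately show ?thesis
    unfolding lprod_split_middle by (simp cong: rprod_cong lprod_cong)
qed

lemma op4_eq_op2:
  assumes "admissible n Q" and "1 \<le> n" and "\<epsilon> = 1 \<or> \<epsilon> = -1"
  shows "dop_neg (rprod (2 * n + 2) (\<lambda>i. dop_minus
            (dop_const (\<lambda>u. epsv n \<epsilon> i * xv n Q i (u + of_nat n + 1 - of_nat i))) dop_D))
       = dop_mult
           (dop_mult
             (rprod n (\<lambda>a. dop_minus (dop_const (\<lambda>u. zv n Q a (u + of_nat n + 1 - of_nat a))) dop_D))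
             (dop_minus (dop_const (\<lambda>u. zbar n Q n (u - 1) * zv n Q n u)) (dop_mult dop_D dop_D)))
           (lprod n (\<lambda>a. dop_minus (dop_const (\<lambda>u. zbar n Q a (u - of_nat n - 2 + of_nat a))) dop_D))"
    (is "dop_neg (rprod _ ?X) = _")
proof -
  have eps: "of_int \<epsilon> * c * (of_int \<epsilon> * d) = c * d" for c d :: 'a
    using assms(3) by auto
  have mid: "xmid n Q u * xmid n Q (u - 1) = zbar n Q n (u - 1) * zv n Q n u" for u
    using xmid_mult_shift[OF assms(1,2), of "u - 1"] by (simp add: mult.commute)
  have "?X a = dop_minus (dop_const (\<lambda>u. zv n Q a (u + of_nat n + 1 - of_nat a))) dop_D"
    if "1 \<le> a" "a \<le> n" for a
    using that by (simp add: epsv_xv_low)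
  moreover have "dop_neg (dop_mult (?X (n + 1)) (?X (n + 2)))
      = dop_minus (dop_const (\<lambda>u. zbar n Q n (u - 1) * zv n Q n u)) (dop_mult dop_D dop_D)"
    by (rule const_minus_D_mult_const_minus_D) (simp_all add: xv_def epsv_def eps mid)
  moreover have "?X (2 * n + 3 - a)
      = dop_minus (dop_const (\<lambda>u. zbar n Q a (u - of_nat n - 2 + of_nat a))) dop_D"
    if "1 \<le> a" "a \<le> n" for a
  proof -
    have "u + of_nat n + 1 - of_nat (2 * n + 3 - a) = u - of_nat n - 2 + of_nat a" for u :: complex
      using that by (simp add: of_nat_diff)
    then show ?thesis
      by (simp only: epsv_xv_high[OF that])
  qed
  ultimately show ?thesis
    unfolding rprod_split_middle dop_neg_mult_middle by (simp cong: rprod_cong lprod_cong)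
qed

lemma Lop_eq_neg_op2:
  assumes "admissible n Q" and "1 \<le> n"
  shows "Lop n Q = dop_neg (dop_mult
           (dop_mult
             (rprod n (\<lambda>a. dop_minus (dop_const (\<lambda>u. zv n Q a (u + of_nat n + 1 - of_nat a))) dop_D))
             (dop_minus (dop_const (\<lambda>u. zbar n Q n (u - 1) * zv n Q n u)) (dop_mult dop_D dop_D)))
           (lprod n (\<lambda>a. dop_minus (dop_const (\<lambda>u. zbar n Q a (u - of_nat n - 2 + of_nat a))) dop_D)))"
    (is "_ = dop_neg ?op2")
proof -
  have "epsv n 1 i = (1 :: 'a)" for i
    by (simp add: epsv_def)
  then have "dop_neg (Lop n Q) = ?op2"
    using op4_eq_op2[OF assms, of 1] by (simp add: Lop_def)
  then show ?thesis
    by (metis dop_neg_neg)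
qed

lemma Lop_degree:
  "(\<forall>j > 2 * n + 2. Lop n Q j = (\<lambda>_. 0)) \<and> Lop n Q (2 * n + 2) \<noteq> (\<lambda>_. 0)"
  using rprod_const_minus_D_coeffs[of "2 * n + 2" "\<lambda>i u. xv n Q i (u + of_nat n + 1 - of_nat i)"]
  unfolding Lop_def by (auto dest: fun_cong[where x = 0])

section \<open>Coefficients in \<open>\<Y>\<close>\<close>

text \<open>Membership in \<open>\<Y>\<close> is uniform in the specialisation: one formal expression has to
  give the value for every admissible \<open>Q\<close>.\<close>

definition in_Y :: "nat \<Rightarrow> ((nat \<Rightarrow> complex \<Rightarrow> 'k::field) \<Rightarrow> 'k) \<Rightarrow> bool" where
  "in_Y n f \<longleftrightarrow> (\<exists>e. \<forall>Q. admissible n Q \<longrightarrow> f Q = yeval n Q e)"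

definition coeffs_in_Y :: "nat \<Rightarrow> ((nat \<Rightarrow> complex \<Rightarrow> 'k::field) \<Rightarrow> 'k dop) \<Rightarrow> bool" where
  "coeffs_in_Y n A \<longleftrightarrow> (\<forall>j u. in_Y n (\<lambda>Q. A Q j u))"

lemma in_Y_of_int: "in_Y n (\<lambda>Q. of_int k)"
  unfolding in_Y_def by (rule exI[of _ "YConst k"]) simp

lemma in_Y_add: "in_Y n f \<Longrightarrow> in_Y n g \<Longrightarrow> in_Y n (\<lambda>Q. f Q + g Q)"
  unfolding in_Y_def by (metis yeval.simps(4))

lemma in_Y_mult: "in_Y n f \<Longrightarrow> in_Y n g \<Longrightarrow> in_Y n (\<lambda>Q. f Q * g Q)"
  unfolding in_Y_def by (metis yeval.simps(5))

lemma in_Y_uminus: "in_Y n f \<Longrightarrow> in_Y n (\<lambda>Q. - f Q)"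
  using in_Y_mult[OF in_Y_of_int[of n "-1"]] by simp

lemma in_Y_diff: "in_Y n f \<Longrightarrow> in_Y n g \<Longrightarrow> in_Y n (\<lambda>Q. f Q - g Q)"
  using in_Y_add[OF _ in_Y_uminus, of n f g] by simp

lemma in_Y_sum: "finite A \<Longrightarrow> (\<And>i. i \<in> A \<Longrightarrow> in_Y n (f i)) \<Longrightarrow> in_Y n (\<lambda>Q. \<Sum>i\<in>A. f i Q)"
  by (induction A rule: finite_induct) (simp_all add: in_Y_add in_Y_of_int[of n 0, simplified])

lemma in_Y_Yv: "a \<le> n \<Longrightarrow> in_Y n (\<lambda>Q. Yv n Q a u)"
  unfolding in_Y_def by (rule exI[of _ "YAtom a u"]) (simp add: Yv_def)

lemma in_Y_inverse_Yv: "a \<le> n \<Longrightarrow> in_Y n (\<lambda>Q. inverse (Yv n Q a u))"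
  unfolding in_Y_def by (rule exI[of _ "YInv a u"]) (simp add: Yv_def)

lemma in_Y_zv: "a \<le> n \<Longrightarrow> in_Y n (\<lambda>Q. zv n Q a u)"
  unfolding zv_def divide_inverse by (intro in_Y_mult in_Y_Yv in_Y_inverse_Yv) simp_all

lemma in_Y_zbar: "a \<le> n \<Longrightarrow> in_Y n (\<lambda>Q. zbar n Q a u)"
  unfolding zbar_def divide_inverse by (intro in_Y_mult in_Y_Yv in_Y_inverse_Yv) simp_all

lemma coeffs_in_Y_cong:
  "coeffs_in_Y n A \<Longrightarrow> (\<And>Q. admissible n Q \<Longrightarrow> B Q = A Q) \<Longrightarrow> coeffs_in_Y n B"
  unfolding coeffs_in_Y_def in_Y_def by metis

lemma coeffs_in_Y_const:
  assumes "\<And>u. in_Y n (\<lambda>Q. c Q u)"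
  shows "coeffs_in_Y n (\<lambda>Q. dop_const (c Q))"
  unfolding coeffs_in_Y_def dop_const_def
proof (intro allI)
  fix j u
  show "in_Y n (\<lambda>Q. if j = 0 then c Q u else 0)"
    using assms in_Y_of_int[of n 0] by (cases "j = 0") simp_all
qed

lemma coeffs_in_Y_D: "coeffs_in_Y n (\<lambda>Q. dop_D)"
  unfolding coeffs_in_Y_def dop_D_def using in_Y_of_int[of n 0] in_Y_of_int[of n 1] by auto

lemma coeffs_in_Y_one: "coeffs_in_Y n (\<lambda>Q. dop_one)"
  unfolding dop_one_def by (rule coeffs_in_Y_const) (rule in_Y_of_int[of n 1, simplified])

lemma coeffs_in_Y_mult:
  "coeffs_in_Y n A \<Longrightarrow> coeffs_in_Y n B \<Longrightarrow> coeffs_in_Y n (\<lambda>Q. dop_mult (A Q) (B Q))"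
  unfolding coeffs_in_Y_def dop_mult_def by (intro allI in_Y_sum in_Y_mult) simp_all

lemma coeffs_in_Y_minus:
  "coeffs_in_Y n A \<Longrightarrow> coeffs_in_Y n B \<Longrightarrow> coeffs_in_Y n (\<lambda>Q. dop_minus (A Q) (B Q))"
  unfolding coeffs_in_Y_def dop_minus_def by (simp add: in_Y_diff)

lemma coeffs_in_Y_neg: "coeffs_in_Y n A \<Longrightarrow> coeffs_in_Y n (\<lambda>Q. dop_neg (A Q))"
  unfolding coeffs_in_Y_def dop_neg_def by (simp add: in_Y_uminus)

lemma coeffs_in_Y_rprod:
  "(\<And>i. 1 \<le> i \<Longrightarrow> i \<le> m \<Longrightarrow> coeffs_in_Y n (\<lambda>Q. X Q i)) \<Longrightarrow> coeffs_in_Y n (\<lambda>Q. rprod m (X Q))"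
  by (induction m) (simp_all add: coeffs_in_Y_one rprod_Suc coeffs_in_Y_mult)

lemma coeffs_in_Y_lprod:
  "(\<And>i. 1 \<le> i \<Longrightarrow> i \<le> m \<Longrightarrow> coeffs_in_Y n (\<lambda>Q. X Q i)) \<Longrightarrow> coeffs_in_Y n (\<lambda>Q. lprod m (X Q))"
  by (induction m) (simp_all add: coeffs_in_Y_one lprod_Suc coeffs_in_Y_mult)

lemma Lop_coeffs_in_Y:
  assumes "1 \<le> n"
  shows "coeffs_in_Y n (Lop n)"
proof (rule coeffs_in_Y_cong[OF _ Lop_eq_neg_op2[OF _ assms]])
  show "coeffs_in_Y n (\<lambda>Q. dop_neg (dop_mult
           (dop_mult
             (rprod n (\<lambda>a. dop_minus (dop_const (\<lambda>u. zv n Q a (u + of_nat n + 1 - of_nat a))) dop_D))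
             (dop_minus (dop_const (\<lambda>u. zbar n Q n (u - 1) * zv n Q n u)) (dop_mult dop_D dop_D)))
           (lprod n (\<lambda>a. dop_minus (dop_const (\<lambda>u. zbar n Q a (u - of_nat n - 2 + of_nat a))) dop_D))))"
    by (intro coeffs_in_Y_neg coeffs_in_Y_mult coeffs_in_Y_rprod coeffs_in_Y_lprod coeffs_in_Y_minus
        coeffs_in_Y_const coeffs_in_Y_D in_Y_mult in_Y_zv in_Y_zbar) simp_all
qed

theorem mainTheorem1:
  fixes n :: nat and \<epsilon> :: int
  assumes "n \<ge> 2" and "\<epsilon> = 1 \<or> \<epsilon> = -1"
  shows
   "(\<forall>Q :: nat \<Rightarrow> complex \<Rightarrow> 'k::field. admissible n Q \<longrightarrow>
      (let N = 2 * n + 2;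
           op1 = dop_mult
                   (dop_mult
                     (rprod n (\<lambda>a. dop_minus dop_one (dop_mult (dop_const (\<lambda>u. zbar n Q a u)) dop_D)))
                     (dop_minus dop_one
                        (dop_mult (dop_const (\<lambda>u. zbar n Q n u * zv n Q n (u + 1)))
                                  (dop_mult dop_D dop_D))))
                   (lprod n (\<lambda>a. dop_minus dop_one (dop_mult (dop_const (\<lambda>u. zv n Q a u)) dop_D)));
           op2 = dop_mult
                   (dop_mult
                     (rprod n (\<lambda>a. dop_minus (dop_const (\<lambda>u. zv n Q a (u + of_nat n + 1 - of_nat a))) dop_D))
                     (dop_minus (dop_const (\<lambda>u. zbar n Q n (u - 1) * zv n Q n u))
                                (dop_mult dop_D dop_D)))
                   (lprod n (\<lambda>a. dop_minus (dop_const (\<lambda>u. zbar n Q a (u - of_nat n - 2 + of_nat a))) dop_D));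
           op3 = lprod N (\<lambda>i. dop_minus dop_one
                   (dop_mult (dop_const (\<lambda>u. epsv n \<epsilon> i * xv n Q i u)) dop_D));
           op4 = dop_neg (rprod N (\<lambda>i. dop_minus
                   (dop_const (\<lambda>u. epsv n \<epsilon> i * xv n Q i (u + of_nat n + 1 - of_nat i))) dop_D))
       in op1 = op2 \<and> op2 = op3 \<and> op3 = op4))
   \<and> (\<forall>Q :: nat \<Rightarrow> complex \<Rightarrow> 'k. admissible n Q \<longrightarrow>
        (\<forall>j > 2 * n + 2. Lop n Q j = (\<lambda>_. 0)) \<and> Lop n Q (2 * n + 2) \<noteq> (\<lambda>_. 0))
   \<and> (\<forall>j u. \<exists>e. \<forall>Q :: nat \<Rightarrow> complex \<Rightarrow> 'k. admissible n Q \<longrightarrow> Lop n Q j u = yeval n Q e)"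
proof -
  have n: "1 \<le> n"
    using assms(1) by simp
  show ?thesis
    using Lop_coeffs_in_Y[OF n]
    unfolding coeffs_in_Y_def in_Y_def Let_def
    \<comment> \<open>keeping \<open>2 * n + 2\<close> unnormalised lets the left-hand sides of the lemmas match\<close>
    by (simp add: op3_eq_op1[OF _ n assms(2)] op4_eq_op2[OF _ n assms(2)] op1_eq_op2[OF _ n] Lop_degree
        del: Num.add_2_eq_Suc')
qed

end
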